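(* Consider an elementary cube of $\mathbb Z^3$ with black base vertex $n$ and black fields $x=x(n)$, $x_{12},x_{23},x_{31}$ (at $n+e_1+e_2$, $n+e_2+e_3$, $n+e_3+e_1$). For each cyclic permutation $(i,j,k)$ of $(1,2,3)$ let $a^{ij},b^{ij},c^{ij},a^{ij}_k,b^{ij}_k,c^{ij}_k$ be nonzero complex numbers with $$b^{ij}c^{ij}=(a^{ij})^2,\qquad b^{ij}_kc^{ij}_k=(a^{ij}_k)^2,$$ and $b^{12}+b^{23}+b^{31}\neq0$. Let $$S^{123}=\sum_{(i,j,k)}\Big(\tfrac12(b^{ij}_kx_{jk}^2+c^{ij}_kx_{ki}^2)-a^{ij}_kx_{jk}x_{ki}-\tfrac12(b^{ij}x^2+c^{ij}x_{ij}^2)+a^{ij}xx_{ij}\Big),$$ summed over the three cyclic permutations. Then the four linear corner equations $\partial S^{123}/\partial x=0$, $\partial S^{123}/\partial x_{12}=0$, $\partial S^{123}/\partial x_{23}=0$, $\partial S^{123}/\partial x_{31}=0$ have rank 1 (are all proportional) if and only if $$a^{12}_3=\frac{a^{23}a^{31}}{\Sigma},\ a^{23}_1=\frac{a^{31}a^{12}}{\Sigma},\ a^{31}_2=\frac{a^{12}a^{23}}{\Sigma},$$ $$b^{12}_3=\frac{c^{23}b^{31}}{\Sigma},\ b^{23}_1=\frac{c^{31}b^{12}}{\Sigma},\ b^{31}_2=\frac{c^{12}b^{23}}{\Sigma},\qquad c^{12}_3=\frac{b^{23}c^{31}}{\Sigma},\ c^{23}_1=\frac{b^{31}c^{12}}{\Sigma},\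 c^{31}_2=\frac{b^{12}c^{23}}{\Sigma},$$ where $\Sigma=b^{12}+b^{23}+b^{31}$.
   Context: $S^{123}$ is the action over the boundary of the cube of the discrete 2-form $\mathcal L(\sigma^{ij})=\frac12(b^{ij}x^2+c^{ij}x_{ij}^2)-a^{ij}xx_{ij}$ on the three plaquettes at $n$ and $\mathcal L(\sigma^{ij}_k)=\frac12(b^{ij}_kx_{jk}^2+c^{ij}_kx_{ki}^2)-a^{ij}_kx_{jk}x_{ki}$ on the opposite plaquettes (whose black vertices are $n+e_j+e_k$ and $n+e_k+e_i$); the conditions $bc=a^2$ say each of these quadratic forms is a complete square. Rank 1 of the corner system is the paper's notion of consistency (forming a pluri-Lagrangian system). *)

theory Defs
  imports "HOL-Analysis.Analysis"
begin

definition S123 ::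
  "complex \<Rightarrow> complex \<Rightarrow> complex \<Rightarrow> complex \<Rightarrow> complex \<Rightarrow> complex \<Rightarrow>
   complex \<Rightarrow> complex \<Rightarrow> complex \<Rightarrow> complex \<Rightarrow> complex \<Rightarrow> complex \<Rightarrow>
   complex \<Rightarrow> complex \<Rightarrow> complex \<Rightarrow> complex \<Rightarrow> complex \<Rightarrow> complex \<Rightarrow>
   complex^4 \<Rightarrow> complex" where
  "S123 a12 b12 c12 a23 b23 c23 a31 b31 c31
        a12_3 b12_3 c12_3 a23_1 b23_1 c23_1 a31_2 b31_2 c31_2 v =
    (let x = v$1; x12 = v$2; x23 = v$3; x31 = v$4 in
      (1/2 * (b12_3 * x23^2 + c12_3 * x31^2) - a12_3 * x23 * x31
        - 1/2 * (b12 * x^2 + c12 * x12^2) + a12 * x * x12)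
    + (1/2 * (b23_1 * x31^2 + c23_1 * x12^2) - a23_1 * x31 * x12
        - 1/2 * (b23 * x^2 + c23 * x23^2) + a23 * x * x23)
    + (1/2 * (b31_2 * x12^2 + c31_2 * x23^2) - a31_2 * x12 * x23
        - 1/2 * (b31 * x^2 + c31 * x31^2) + a31 * x * x31))"

definition partial :: "(complex^4 \<Rightarrow> complex) \<Rightarrow> 4 \<Rightarrow> complex^4 \<Rightarrow> complex" where
  "partial S i v = deriv (\<lambda>t. S (v + axis i t)) 0"

text \<open>Coefficient matrix of the (linear, homogeneous) corner equations
  \<partial>S/\<partial>v_i = 0, i = 1..4: entry (i,j) is the coefficient of v_j in \<partial>S/\<partial>v_i.\<close>
definition corner_matrix :: "(complex^4 \<Rightarrow> complex) \<Rightarrow> complex^4^4" where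
  "corner_matrix S = (\<chi> i j. partial S i (axis j 1))"

end

(* The corner matrix is the symmetric Hessian of S^123, with (1,1) entry -\<Sigma> \<noteq> 0, so it has
   rank 1 iff its 2x2 minors through that entry vanish.  Three of these minors pin down the
   a-coefficients; given those, the complete squares on the far plaquettes can be written as
   b^31_2 = c^12 b^23 u / \<Sigma>, c^31_2 = b^12 c^23 / (u \<Sigma>) and cyclically with scales v, w.
   The three diagonal minors then become a cyclic system in u, v, w whose only nonzero
   solution, since \<Sigma> \<noteq> 0, is u = v = w = 1: these are the stated formulas. *)

theory Submission
  imports Defs
begin

lemma rank_eq_1_iff_rows_in_span:
  fixes A :: "'a::field^'n^'m"
  assumes "row k A \<noteq> 0"
  shows "rank A = 1 \<longleftrightarrow> (\<forall>i. row i A \<in> vec.span {row k A})"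
proof
  have "row k A \<in> rows A" by (auto simp: rows_def)
  moreover assume "rank A = 1"
  ultimately have "vec.span {row k A} = vec.span (rows A)"
    using assms by (intro vec.dim_eq_span) (auto simp: row_rank_def_gen)
  then show "\<forall>i. row i A \<in> vec.span {row k A}"
    by (auto simp: rows_def intro: vec.span_base)
next
  assume "\<forall>i. row i A \<in> vec.span {row k A}"
  then have "vec.span (rows A) = vec.span {row k A}"
    unfolding vec.span_eq by (auto simp: rows_def intro: vec.span_base)
  then show "rank A = 1"
    using assms by (metis row_rank_def_gen vec.dim_span vec.dim_singleton)
qed

lemma row_in_span_row_iff_minors:
  fixes A :: "'a::field^'n^'m"
  assumes "A$k$l \<noteq> 0"
  shows "row i A \<in> vec.span {row k A} \<longleftrightarrow> (\<forall>j. A$i$j * A$k$l = A$i$l * A$k$j)"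
proof
  assume "row i A \<in> vec.span {row k A}"
  then obtain c where "row i A = c *s row k A" by (auto simp: vec.span_singleton)
  then show "\<forall>j. A$i$j * A$k$l = A$i$l * A$k$j" by (simp add: vec_eq_iff row_def)
next
  assume "\<forall>j. A$i$j * A$k$l = A$i$l * A$k$j"
  then have "row i A = (A$i$l / A$k$l) *s row k A"
    using assms by (simp add: vec_eq_iff row_def field_simps)
  then show "row i A \<in> vec.span {row k A}" by (auto simp: vec.span_singleton)
qed

corollary rank_eq_1_iff_minors:
  fixes A :: "'a::field^'n^'m"
  assumes "A$k$l \<noteq> 0"
  shows "rank A = 1 \<longleftrightarrow> (\<forall>i j. A$i$j * A$k$l = A$i$l * A$k$j)"
proof -
  have "row k A \<noteq> 0" using assms by (auto simp: row_def vec_eq_iff)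
  then show ?thesis
    by (simp only: rank_eq_1_iff_rows_in_span row_in_span_row_iff_minors[OF assms])
qed

lemma complete_square_scaled_factors:
  fixes a b c a1 b1 c1 a2 b2 c2 s :: "'a::field"
  assumes "b * c = a^2" "b1 * c1 = a1^2" "b2 * c2 = a2^2" "a * s = a1 * a2"
    and "b \<noteq> 0" "c1 \<noteq> 0" "b2 \<noteq> 0" "s \<noteq> 0"
  obtains u where "u \<noteq> 0" "b * s = c1 * b2 * u" "c * s * u = b1 * c2"
proof
  define u where "u = b * s / (c1 * b2)"
  show "u \<noteq> 0" "b * s = c1 * b2 * u" using assms by (simp_all add: u_def)
  have "(b * s) * (c * s) = (a * s)^2" using assms(1) by (simp add: power2_eq_square)
  also have "\<dots> = (b1 * c1) * (b2 * c2)" using assms(2-4) by (simp add: power_mult_distrib)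
  finally have "(c1 * b2) * (c * s * u) = (c1 * b2) * (b1 * c2)"
    unfolding \<open>b * s = c1 * b2 * u\<close> by (simp add: ac_simps)
  then show "c * s * u = b1 * c2" using assms by simp
qed

lemma diagonal_minor_iff:
  fixes b1 b2 b3 c1 b' c' u w s :: "'a::field"
  assumes "b' * s = c1 * b2 * u" "c' * s * w = b3 * c1" "s = b1 + b2 + b3"
    and "c1 \<noteq> 0" "w \<noteq> 0"
  shows "(b' + c' - c1) * s = - (b1 * c1) \<longleftrightarrow> b2 * w * (u - 1) = b3 * (w - 1)"
proof -
  have "((b' + c' - c1) * s + b1 * c1) * w = c1 * (b2 * w * (u - 1) - b3 * (w - 1))"
    using assms(1-3) by algebra
  then show ?thesis
    using assms(4,5) by (auto simp: eq_neg_iff_add_eq_0 right_minus_eq)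
qed

lemma cyclic_system_eq_1:
  fixes P Q R u v w :: "'a::field"
  assumes e1: "R * u * (v - 1) = P * (u - 1)"
    and e2: "P * v * (w - 1) = Q * (v - 1)"
    and e3: "Q * w * (u - 1) = R * (w - 1)"
    and nz: "P \<noteq> 0" "Q \<noteq> 0" "R \<noteq> 0" "P + Q + R \<noteq> 0" "u \<noteq> 0" "v \<noteq> 0" "w \<noteq> 0"
  shows "u = 1 \<and> v = 1 \<and> w = 1"
proof (cases "u = 1")
  case True
  then show ?thesis using e2 e3 nz by auto
next
  case False
  then have "v \<noteq> 1" "w \<noteq> 1" using e1 e2 nz by auto
  moreover have "P * Q * R * (u - 1) * (v - 1) * (w - 1) * (u * v * w - 1) = 0"
    \<comment> \<open>the product of the three equations\<close>
    using e1 e2 e3 by algebra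
  ultimately have "u * v * w = 1" using False nz by simp
  then have "w * (P + Q + R) * (u - 1) = 0" using e1 e3 by algebra
  then show ?thesis using False nz by simp
qed

context
  fixes a12 b12 c12 a23 b23 c23 a31 b31 c31
        a12_3 b12_3 c12_3 a23_1 b23_1 c23_1 a31_2 b31_2 c31_2 :: complex
begin

abbreviation S where
  "S \<equiv> S123 a12 b12 c12 a23 b23 c23 a31 b31 c31
          a12_3 b12_3 c12_3 a23_1 b23_1 c23_1 a31_2 b31_2 c31_2"

lemma partial_S123:
  "partial S 1 v = - (b12 + b23 + b31) * v$1 + a12 * v$2 + a23 * v$3 + a31 * v$4"
  "partial S 2 v = a12 * v$1 + (b31_2 + c23_1 - c12) * v$2 - a31_2 * v$3 - a23_1 * v$4"
  "partial S 3 v = a23 * v$1 - a31_2 * v$2 + (b12_3 + c31_2 - c23) * v$3 - a12_3 * v$4"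
  "partial S 4 v = a31 * v$1 - a23_1 * v$2 - a12_3 * v$3 + (b23_1 + c12_3 - c31) * v$4"
  unfolding partial_def S123_def Let_def
  by (rule DERIV_imp_deriv; auto intro!: derivative_eq_intros simp: axis_def algebra_simps)+

text \<open>The 2x2 minors of the corner matrix through its (1,1) entry; as the matrix is symmetric,
  every other such minor is trivially zero or the transpose of one of these six.\<close>
definition corner_minors_vanish :: bool where
  "corner_minors_vanish \<longleftrightarrow> (let \<Sigma> = b12 + b23 + b31 in
     a12_3 * \<Sigma> = a23 * a31 \<and> a23_1 * \<Sigma> = a31 * a12 \<and> a31_2 * \<Sigma> = a12 * a23 \<and>
     (b31_2 + c23_1 - c12) * \<Sigma> = - (a12^2) \<and> (b12_3 + c31_2 - c23) * \<Sigma> = - (a23^2) \<and>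
     (b23_1 + c12_3 - c31) * \<Sigma> = - (a31^2))"

lemma rank_corner_matrix_eq_1_iff:
  assumes "b12 + b23 + b31 \<noteq> 0"
  shows "rank (corner_matrix S) = 1 \<longleftrightarrow> corner_minors_vanish"
proof -
  let ?M = "corner_matrix S"
  have "?M $ 1 $ 1 = - (b12 + b23 + b31)" by (simp add: corner_matrix_def partial_S123 axis_def)
  then have "?M $ 1 $ 1 \<noteq> 0" using assms by (metis neg_equal_0_iff_equal)
  then have "rank ?M = 1 \<longleftrightarrow> (\<forall>i j. ?M$i$j * ?M$1$1 = ?M$i$1 * ?M$1$j)"
    by (rule rank_eq_1_iff_minors)
  also have "\<dots> \<longleftrightarrow> corner_minors_vanish"
    by (simp add: forall_4 corner_matrix_def partial_S123 axis_def corner_minors_vanish_def)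
      (auto simp: algebra_simps power2_eq_square)
  finally show ?thesis .
qed

context
  fixes \<Sigma> :: complex
  assumes nz: "a12 \<noteq> 0" "b12 \<noteq> 0" "c12 \<noteq> 0" "a23 \<noteq> 0" "b23 \<noteq> 0" "c23 \<noteq> 0"
              "a31 \<noteq> 0" "b31 \<noteq> 0" "c31 \<noteq> 0"
              "a12_3 \<noteq> 0" "b12_3 \<noteq> 0" "c12_3 \<noteq> 0" "a23_1 \<noteq> 0" "b23_1 \<noteq> 0" "c23_1 \<noteq> 0"
              "a31_2 \<noteq> 0" "b31_2 \<noteq> 0" "c31_2 \<noteq> 0"
    and sq: "b12 * c12 = a12^2" "b23 * c23 = a23^2" "b31 * c31 = a31^2"
            "b12_3 * c12_3 = a12_3^2" "b23_1 * c23_1 = a23_1^2" "b31_2 * c31_2 = a31_2^2"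
    and \<Sigma>_def: "\<Sigma> = b12 + b23 + b31"
    and \<Sigma>_nz: "\<Sigma> \<noteq> 0"
begin

lemma coefficients_if_corner_minors_vanish:
  assumes corner_minors_vanish
  shows "a12_3 = a23 * a31 / \<Sigma> \<and> a23_1 = a31 * a12 / \<Sigma> \<and> a31_2 = a12 * a23 / \<Sigma> \<and>
    b12_3 = c23 * b31 / \<Sigma> \<and> b23_1 = c31 * b12 / \<Sigma> \<and> b31_2 = c12 * b23 / \<Sigma> \<and>
    c12_3 = b23 * c31 / \<Sigma> \<and> c23_1 = b31 * c12 / \<Sigma> \<and> c31_2 = b12 * c23 / \<Sigma>"
proof -
  have a: "a12_3 * \<Sigma> = a23 * a31" "a23_1 * \<Sigma> = a31 * a12" "a31_2 * \<Sigma> = a12 * a23"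
    and d: "(b31_2 + c23_1 - c12) * \<Sigma> = - (b12 * c12)" "(b12_3 + c31_2 - c23) * \<Sigma> = - (b23 * c23)"
      "(b23_1 + c12_3 - c31) * \<Sigma> = - (b31 * c31)"
    using assms unfolding corner_minors_vanish_def Let_def \<Sigma>_def[symmetric] sq by auto
  obtain u where u: "u \<noteq> 0" "b31_2 * \<Sigma> = c12 * b23 * u" "c31_2 * \<Sigma> * u = b12 * c23"
    by (rule complete_square_scaled_factors[OF sq(6,1,2) a(3) nz(17,3,5) \<Sigma>_nz])
  obtain v where v: "v \<noteq> 0" "b12_3 * \<Sigma> = c23 * b31 * v" "c12_3 * \<Sigma> * v = b23 * c31"
    by (rule complete_square_scaled_factors[OF sq(4,2,3) a(1) nz(11,6,8) \<Sigma>_nz])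
  obtain w where w: "w \<noteq> 0" "b23_1 * \<Sigma> = c31 * b12 * w" "c23_1 * \<Sigma> * w = b31 * c12"
    by (rule complete_square_scaled_factors[OF sq(5,3,1) a(2) nz(14,9,2) \<Sigma>_nz])
  have \<Sigma>_rotated: "\<Sigma> = b23 + b31 + b12" "\<Sigma> = b31 + b12 + b23"
    using \<Sigma>_def by (simp_all add: ac_simps)
  have "b31 * u * (v - 1) = b12 * (u - 1)"
    using diagonal_minor_iff[OF v(2) u(3) \<Sigma>_rotated(1) nz(6) u(1)] d(2) by blast
  moreover have "b12 * v * (w - 1) = b23 * (v - 1)"
    using diagonal_minor_iff[OF w(2) v(3) \<Sigma>_rotated(2) nz(9) v(1)] d(3) by blast
  moreover have "b23 * w * (u - 1) = b31 * (w - 1)"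
    using diagonal_minor_iff[OF u(2) w(3) \<Sigma>_def nz(3) w(1)] d(1) by blast
  ultimately have "u = 1" "v = 1" "w = 1"
    using cyclic_system_eq_1 nz(2,5,8) \<Sigma>_nz[unfolded \<Sigma>_def] u(1) v(1) w(1) by blast+
  then show ?thesis
    using a u v w \<Sigma>_nz by (simp add: field_simps)
qed

lemma corner_minors_vanish_if_coefficients:
  assumes "a12_3 = a23 * a31 / \<Sigma> \<and> a23_1 = a31 * a12 / \<Sigma> \<and> a31_2 = a12 * a23 / \<Sigma> \<and>
    b12_3 = c23 * b31 / \<Sigma> \<and> b23_1 = c31 * b12 / \<Sigma> \<and> b31_2 = c12 * b23 / \<Sigma> \<and>
    c12_3 = b23 * c31 / \<Sigma> \<and> c23_1 = b31 * c12 / \<Sigma> \<and> c31_2 = b12 * c23 / \<Sigma>"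
  shows corner_minors_vanish
proof -
  have a: "a12_3 * \<Sigma> = a23 * a31" "a23_1 * \<Sigma> = a31 * a12" "a31_2 * \<Sigma> = a12 * a23"
    and u: "b31_2 * \<Sigma> = c12 * b23 * 1" "c31_2 * \<Sigma> * 1 = b12 * c23"
    and v: "b12_3 * \<Sigma> = c23 * b31 * 1" "c12_3 * \<Sigma> * 1 = b23 * c31"
    and w: "b23_1 * \<Sigma> = c31 * b12 * 1" "c23_1 * \<Sigma> * 1 = b31 * c12"
    using assms \<Sigma>_nz by simp_all
  have \<Sigma>_rotated: "\<Sigma> = b23 + b31 + b12" "\<Sigma> = b31 + b12 + b23"
    using \<Sigma>_def by (simp_all add: ac_simps)
  have "(b31_2 + c23_1 - c12) * \<Sigma> = - (b12 * c12)"
    using diagonal_minor_iff[OF u(1) w(2) \<Sigma>_def nz(3) one_neq_zero] by simp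
  moreover have "(b12_3 + c31_2 - c23) * \<Sigma> = - (b23 * c23)"
    using diagonal_minor_iff[OF v(1) u(2) \<Sigma>_rotated(1) nz(6) one_neq_zero] by simp
  moreover have "(b23_1 + c12_3 - c31) * \<Sigma> = - (b31 * c31)"
    using diagonal_minor_iff[OF w(1) v(2) \<Sigma>_rotated(2) nz(9) one_neq_zero] by simp
  ultimately show corner_minors_vanish
    using a unfolding corner_minors_vanish_def Let_def \<Sigma>_def[symmetric] sq by auto
qed

end

end

theorem theorem11:
  fixes a12 b12 c12 a23 b23 c23 a31 b31 c31
        a12_3 b12_3 c12_3 a23_1 b23_1 c23_1 a31_2 b31_2 c31_2 :: complex
  assumes nz: "a12 \<noteq> 0" "b12 \<noteq> 0" "c12 \<noteq> 0" "a23 \<noteq> 0" "b23 \<noteq> 0" "c23 \<noteq> 0"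
              "a31 \<noteq> 0" "b31 \<noteq> 0" "c31 \<noteq> 0"
              "a12_3 \<noteq> 0" "b12_3 \<noteq> 0" "c12_3 \<noteq> 0" "a23_1 \<noteq> 0" "b23_1 \<noteq> 0" "c23_1 \<noteq> 0"
              "a31_2 \<noteq> 0" "b31_2 \<noteq> 0" "c31_2 \<noteq> 0"
    and sq: "b12 * c12 = a12^2" "b23 * c23 = a23^2" "b31 * c31 = a31^2"
            "b12_3 * c12_3 = a12_3^2" "b23_1 * c23_1 = a23_1^2" "b31_2 * c31_2 = a31_2^2"
    and sigma: "b12 + b23 + b31 \<noteq> 0"
  shows "rank (corner_matrix (S123 a12 b12 c12 a23 b23 c23 a31 b31 c31
                 a12_3 b12_3 c12_3 a23_1 b23_1 c23_1 a31_2 b31_2 c31_2)) = 1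
    \<longleftrightarrow>
    (let \<Sigma> = b12 + b23 + b31 in
      a12_3 = a23 * a31 / \<Sigma> \<and> a23_1 = a31 * a12 / \<Sigma> \<and> a31_2 = a12 * a23 / \<Sigma> \<and>
      b12_3 = c23 * b31 / \<Sigma> \<and> b23_1 = c31 * b12 / \<Sigma> \<and> b31_2 = c12 * b23 / \<Sigma> \<and>
      c12_3 = b23 * c31 / \<Sigma> \<and> c23_1 = b31 * c12 / \<Sigma> \<and> c31_2 = b12 * c23 / \<Sigma>)"
  unfolding rank_corner_matrix_eq_1_iff[OF sigma] Let_def
  using coefficients_if_corner_minors_vanish[OF nz sq refl sigma]
    corner_minors_vanish_if_coefficients[OF nz sq refl sigma]
  by blast

end
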